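(* Let $m, n_0, n_1$ be positive integers and $n(\lambda) = n_0 + n_1\lambda$. If nonzero polynomials $x(\lambda), y(\lambda), z(\lambda) \in \mathbb{Q}[\lambda]$ satisfy $$\frac{m}{n(\lambda)} = \frac{1}{x(\lambda)} + \frac{1}{y(\lambda)} + \frac{1}{z(\lambda)}$$ identically, then at least one of $x, y, z$ has degree $1$.
   Context: $\lambda$ is an indeterminate; the equation is an identity of rational functions in $\lambda$. *)

theory Defs
  imports "HOL-Computational_Algebra.Polynomial_Factorial"
begin

end

theory Submission
  imports Defs
begin

(* Look at the identity near lambda = infinity, where p/q vanishes to order deg q - deg p.
   Every 1/w with deg w <> 1 is a constant plus a function vanishing to order at least 2
   (it is either a constant or already of that order).  Subtracting the constants c, the
   left side m/n(lambda) - c would vanish to order at least 2; but it equals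
   (m - c n(lambda))/n(lambda) with a nonzero numerator of degree at most 1, so its order
   is 0 or 1. *)

definition ord_infinity_ge :: "nat \<Rightarrow> 'a::idom poly fract \<Rightarrow> bool" where
  "ord_infinity_ge k f \<longleftrightarrow>
     (\<exists>p q. q \<noteq> 0 \<and> f = to_fract p / to_fract q \<and> (p = 0 \<or> degree p + k \<le> degree q))"

lemma ord_infinity_ge_quotient_iff:
  fixes p q :: "'a::idom poly"
  assumes "q \<noteq> 0"
  shows "ord_infinity_ge k (to_fract p / to_fract q) \<longleftrightarrow> p = 0 \<or> degree p + k \<le> degree q"
proof
  assume "ord_infinity_ge k (to_fract p / to_fract q)"
  then obtain p' q' where "q' \<noteq> 0" and eq: "to_fract p / to_fract q = to_fract p' / to_fract q'"
    and p': "p' = 0 \<or> degree p' + k \<le> degree q'"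
    unfolding ord_infinity_ge_def by blast
  have cross: "p * q' = p' * q"
    using eq assms \<open>q' \<noteq> 0\<close> by (simp add: field_simps flip: to_fract_mult)
  show "p = 0 \<or> degree p + k \<le> degree q"
  proof (cases "p = 0")
    case False
    then have "p' \<noteq> 0" using cross assms \<open>q' \<noteq> 0\<close> by auto
    have "degree p + degree q' = degree p' + degree q"
      using arg_cong[OF cross, of degree] False \<open>p' \<noteq> 0\<close> assms \<open>q' \<noteq> 0\<close>
      by (simp add: degree_mult_eq)
    then show ?thesis using p' \<open>p' \<noteq> 0\<close> by linarith
  qed simp
qed (use assms in \<open>auto simp: ord_infinity_ge_def\<close>)

lemma ord_infinity_ge_0 [simp]: "ord_infinity_ge k 0"
  using ord_infinity_ge_quotient_iff[where p = 0 and q = 1] by simp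

lemma ord_infinity_ge_add:
  assumes "ord_infinity_ge k f" and "ord_infinity_ge k g"
  shows "ord_infinity_ge k (f + g)"
proof -
  obtain p1 q1 where q1: "q1 \<noteq> 0" and f: "f = to_fract p1 / to_fract q1"
    and p1: "p1 = 0 \<or> degree p1 + k \<le> degree q1"
    using assms(1) unfolding ord_infinity_ge_def by blast
  obtain p2 q2 where q2: "q2 \<noteq> 0" and g: "g = to_fract p2 / to_fract q2"
    and p2: "p2 = 0 \<or> degree p2 + k \<le> degree q2"
    using assms(2) unfolding ord_infinity_ge_def by blast
  show ?thesis
  proof (cases "p1 = 0 \<or> p2 = 0")
    case True
    then show ?thesis using assms f g by auto
  next
    case False
    let ?D = "degree q1 + degree q2"
    have sum: "f + g = to_fract (p1 * q2 + p2 * q1) / to_fract (q1 * q2)"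
      using f g q1 q2 by (simp add: field_simps)
    have "degree (p1 * q2) \<le> ?D - k" "degree (p2 * q1) \<le> ?D - k"
      using False p1 p2 q1 q2 by (auto simp: degree_mult_eq)
    then have "degree (p1 * q2 + p2 * q1) + k \<le> degree (q1 * q2)"
      using False p1 q1 q2 degree_add_le[of "p1 * q2" "?D - k" "p2 * q1"]
      by (simp add: degree_mult_eq)
    then show ?thesis
      unfolding sum using q1 q2 by (subst ord_infinity_ge_quotient_iff) simp_all
  qed
qed

lemma inverse_poly_eq_const_plus_ord_infinity_ge:
  fixes w :: "'a::field poly"
  assumes "w \<noteq> 0" and "degree w = 0 \<or> k \<le> degree w"
  obtains c where "ord_infinity_ge k (1 / to_fract w - to_fract [:c:])"
proof (cases "degree w = 0")
  case True
  then obtain u where "w = [:u:]" and "u \<noteq> 0"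
    using assms(1) by (metis degree_eq_zeroE pCons_0_0)
  then have "1 / to_fract w - to_fract [:inverse u:] = 0"
    by (simp add: field_simps flip: to_fract_mult one_pCons)
  then show ?thesis using that by (metis ord_infinity_ge_0)
next
  case False
  then have "ord_infinity_ge k (1 / to_fract w)"
    using assms ord_infinity_ge_quotient_iff[where p = 1 and q = w] by simp
  then show ?thesis using that[of 0] by simp
qed

lemma not_ord_infinity_ge_const_div_minus_const:
  fixes N :: "'a::field poly"
  assumes "r \<noteq> 0" and "0 < degree N" and "degree N < k"
  shows "\<not> ord_infinity_ge k (to_fract [:r:] / to_fract N - to_fract [:c:])"
proof -
  have "N \<noteq> 0" using assms(2) by auto
  have numerator: "[:r:] - [:c:] * N \<noteq> 0"
  proof (cases "c = 0")
    case False
    have "degree ([:r:] + - ([:c:] * N)) = degree (- ([:c:] * N))"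
      using False assms(2) by (intro degree_add_eq_right) simp
    then have "degree ([:r:] - [:c:] * N) = degree N"
      using False by simp
    then show ?thesis using assms(2) by auto
  qed (use assms(1) in simp)
  have quotient: "to_fract [:r:] / to_fract N - to_fract [:c:]
      = to_fract ([:r:] - [:c:] * N) / to_fract N"
    using \<open>N \<noteq> 0\<close> by (simp only: to_fract_diff to_fract_mult diff_divide_distrib) simp
  show ?thesis
    unfolding quotient ord_infinity_ge_quotient_iff[OF \<open>N \<noteq> 0\<close>]
    using numerator assms(3) by simp
qed

theorem lemma1:
  fixes m n0 n1 :: nat and x y z :: "rat poly"
  assumes "m > 0" and "n0 > 0" and "n1 > 0"
    and "x \<noteq> 0" and "y \<noteq> 0" and "z \<noteq> 0"
    and "to_fract [:of_nat m:] / to_fract [:of_nat n0, of_nat n1:]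
         = 1 / to_fract x + 1 / to_fract y + 1 / to_fract z"
  shows "degree x = 1 \<or> degree y = 1 \<or> degree z = 1"
proof (rule ccontr)
  assume "\<not> ?thesis"
  then have "degree w = 0 \<or> 2 \<le> degree w" if "w \<in> {x, y, z}" for w
    using that by auto
  then obtain cx cy cz where
    "ord_infinity_ge 2 (1 / to_fract x - to_fract [:cx:])"
    "ord_infinity_ge 2 (1 / to_fract y - to_fract [:cy:])"
    "ord_infinity_ge 2 (1 / to_fract z - to_fract [:cz:])"
    using inverse_poly_eq_const_plus_ord_infinity_ge assms(4-6) by (metis insertCI)
  then have "ord_infinity_ge 2 ((1 / to_fract x - to_fract [:cx:])
      + (1 / to_fract y - to_fract [:cy:]) + (1 / to_fract z - to_fract [:cz:]))"
    by (intro ord_infinity_ge_add)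
  also have "\<dots> = to_fract [:of_nat m:] / to_fract [:of_nat n0, of_nat n1:]
      - to_fract [:cx + cy + cz:]"
    using assms(7) by (simp add: algebra_simps flip: to_fract_add)
  finally show False
    using not_ord_infinity_ge_const_div_minus_const[of "of_nat m :: rat" "[:of_nat n0, of_nat n1:]" 2]
      assms(1,3) by simp
qed

end
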